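(* Let $G$ be a finite graph with a fixed orientation of each edge, and let $p\colon \widehat G\to G$ be its oriented edge double with involution $\sigma\colon\widehat G\to\widehat G$. Let $E_1,E_{-1}\subseteq H_1(\widehat G;\mathbb{R})$ be the eigenspaces of $\sigma_*$ for the eigenvalues $1$ and $-1$. Then $H_1(\widehat G;\mathbb{R})=E_1\oplus E_{-1}$, the map $p_*\colon H_1(\widehat G;\mathbb{R})\to H_1(G;\mathbb{R})$ restricts to an isomorphism $E_1\to H_1(G;\mathbb{R})$, and $\ker(p_* )=E_{-1}$, which is isomorphic to the space $C_1(G;\mathbb{R})$ of simplicial $1$-chains of $G$.
   Context: The oriented edge double of $G$ is the graph $\widehat G$ together with a map $p\colon\widehat G\to G$ that is a bijection on vertices and such that for each oriented edge $e$ of $G$ there are exactly two oriented edges $e_+,e_-$ of $\widehat G$ over it, with $p(e_+)=e$ and $p(e_-)=\overline e$ (here $\overline e$ denotes $e$ with reversed orientation). The involution $\sigma\colon\widehat G\to\widehat G$ is defined by $e_+\mapsto \overline{e_-}$ and $e_-\mapsto\overline{e_+}$; it satisfies $p\circ\sigma=p$. *)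

theory Defs
  imports "HOL-Analysis.Analysis" "HOL-Library.Function_Algebras" "Graph_Theory.Digraph"
begin

text \<open>A finite graph with a fixed orientation of each edge is a finite (multi)digraph
  in the sense of Graph_Theory: each arc e goes from tail G e to head G e.\<close>

definition chain_scale :: "real \<Rightarrow> ('b \<Rightarrow> real) \<Rightarrow> ('b \<Rightarrow> real)" where
  "chain_scale a c = (\<lambda>e. a * c e)"

definition C1 :: "('a, 'b) pre_digraph \<Rightarrow> ('b \<Rightarrow> real) set" where
  "C1 G = {c. \<forall>e. e \<notin> arcs G \<longrightarrow> c e = 0}"

definition boundary1 :: "('a, 'b) pre_digraph \<Rightarrow> ('b \<Rightarrow> real) \<Rightarrow> 'a \<Rightarrow> real" where
  "boundary1 G c v =
     (\<Sum>e\<in>{e\<in>arcs G. head G e = v}. c e) - (\<Sum>e\<in>{e\<in>arcs G. tail G e = v}. c e)"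

text \<open>H_1(G;R): a graph is a 1-dimensional complex (no 2-cells), so H_1 = Z_1 = ker of the boundary.\<close>
definition H1 :: "('a, 'b) pre_digraph \<Rightarrow> ('b \<Rightarrow> real) set" where
  "H1 G = {c \<in> C1 G. \<forall>v\<in>verts G. boundary1 G c v = 0}"

text \<open>Oriented edge double: same vertices; for each edge e of G two edges (e,True) = e_+
  (oriented like e, lying over e) and (e,False) = e_- (oriented from head to tail, lying over
  the reverse of e).\<close>
definition edge_double :: "('a, 'b) pre_digraph \<Rightarrow> ('a, 'b \<times> bool) pre_digraph" where
  "edge_double G = \<lparr> verts = verts G, arcs = arcs G \<times> UNIV,
     tail = (\<lambda>(e, b). if b then tail G e else head G e),
     head = (\<lambda>(e, b). if b then head G e else tail G e) \<rparr>"

text \<open>Chain map induced by p: e_+ \<mapsto> e, e_- \<mapsto> reverse of e = -e.\<close>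
definition double_proj :: "('b \<times> bool \<Rightarrow> real) \<Rightarrow> ('b \<Rightarrow> real)" where
  "double_proj c = (\<lambda>e. c (e, True) - c (e, False))"

text \<open>Chain map induced by the involution sigma: e_+ \<mapsto> reverse of e_-, e_- \<mapsto> reverse of e_+.\<close>
definition double_inv :: "('b \<times> bool \<Rightarrow> real) \<Rightarrow> ('b \<times> bool \<Rightarrow> real)" where
  "double_inv c = (\<lambda>(e, b). - c (e, \<not> b))"

end

theory Submission
  imports Defs
begin

text \<open>The chain map p of the edge double commutes with the boundary, so a chain c of the double
  is a cycle exactly when p c is a cycle of G. Moreover p \<circ> \<sigma> = p and p c = 0 holds exactly
  when \<sigma> c = -c. Every cycle c therefore splits as (c + \<sigma> c)/2 + (c - \<sigma> c)/2 into eigenvectors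
  for 1 and -1; the eigenvectors for 1 are the chains with c(e_-) = -c(e_+), on which p is
  inverted by halving, and the eigenvectors for -1 are the chains with c(e_-) = c(e_+), which
  are all cycles and are determined by their values on the edges e_+.\<close>

lemma vector_space_chain_scale: "vector_space (chain_scale :: real \<Rightarrow> ('c \<Rightarrow> real) \<Rightarrow> _)"
  by unfold_locales (auto simp: chain_scale_def fun_eq_iff algebra_simps)

lemma linear_chain_scaleI:
  fixes f :: "('c \<Rightarrow> real) \<Rightarrow> ('d \<Rightarrow> real)"
  assumes "\<And>x y. f (x + y) = f x + f y" and "\<And>a x. f (chain_scale a x) = chain_scale a (f x)"
  shows "Vector_Spaces.linear chain_scale chain_scale f"
  using assms by (simp add: Vector_Spaces.linear_iff vector_space_chain_scale)

lemma zero_in_H1: "0 \<in> H1 G"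
  by (simp add: H1_def C1_def boundary1_def)

lemma H1_add: "x \<in> H1 G \<Longrightarrow> y \<in> H1 G \<Longrightarrow> x + y \<in> H1 G"
  by (auto simp: H1_def C1_def boundary1_def sum.distrib)

lemma boundary1_eq_sum_incidence:
  assumes "finite (arcs G)"
  shows "boundary1 G c v =
    (\<Sum>e\<in>arcs G. c e * ((if head G e = v then 1 else 0) - (if tail G e = v then 1 else 0)))"
  unfolding boundary1_def sum.inter_filter[OF assms] sum_subtractf[symmetric]
  by (rule sum.cong) auto

lemma boundary1_edge_double:
  assumes "finite (arcs G)"
  shows "boundary1 (edge_double G) c v = boundary1 G (double_proj c) v"
proof -
  let ?inc = "\<lambda>H e. (if head H e = v then 1 else 0) - (if tail H e = v then (1::real) else 0)"
  have fin: "finite (arcs (edge_double G))"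
    using assms by (simp add: edge_double_def)
  have "boundary1 (edge_double G) c v =
      (\<Sum>e\<in>arcs G. \<Sum>b\<in>UNIV. c (e, b) * ?inc (edge_double G) (e, b))"
    unfolding boundary1_eq_sum_incidence[OF fin] sum.cartesian_product
    by (rule sum.cong) (auto simp: edge_double_def)
  also have "\<dots> = (\<Sum>e\<in>arcs G. double_proj c e * ?inc G e)"
    by (rule sum.cong) (auto simp: UNIV_bool edge_double_def double_proj_def algebra_simps)
  also have "\<dots> = boundary1 G (double_proj c) v"
    using boundary1_eq_sum_incidence[OF assms] by simp
  finally show ?thesis .
qed

lemma C1_edge_double_iff: "c \<in> C1 (edge_double G) \<longleftrightarrow> (\<forall>e b. e \<notin> arcs G \<longrightarrow> c (e, b) = 0)"
  by (auto simp: C1_def edge_double_def)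

lemma H1_edge_double_iff:
  assumes "finite (arcs G)"
  shows "c \<in> H1 (edge_double G) \<longleftrightarrow> c \<in> C1 (edge_double G) \<and> double_proj c \<in> H1 G"
  using boundary1_edge_double[OF assms, of c]
  by (auto simp: H1_def C1_edge_double_iff C1_def double_proj_def edge_double_def)

lemma double_inv_fixed_iff: "double_inv c = c \<longleftrightarrow> (\<forall>e. c (e, False) = - c (e, True))"
  by (auto simp: double_inv_def fun_eq_iff all_bool_eq)

lemma double_inv_neg_iff: "double_inv c = - c \<longleftrightarrow> (\<forall>e. c (e, False) = c (e, True))"
  by (auto simp: double_inv_def fun_eq_iff all_bool_eq)

lemma double_proj_eq_0_iff: "double_proj c = 0 \<longleftrightarrow> double_inv c = - c"
  unfolding double_inv_neg_iff by (auto simp: double_proj_def fun_eq_iff)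

lemma double_proj_double_inv: "double_proj (double_inv c) = double_proj c"
  by (simp add: double_proj_def double_inv_def)

lemma linear_double_proj: "Vector_Spaces.linear chain_scale chain_scale double_proj"
  by (rule linear_chain_scaleI) (auto simp: double_proj_def chain_scale_def fun_eq_iff algebra_simps)

lemma H1_edge_double_eigenspaces_inter:
  "{c \<in> H1 (edge_double G). double_inv c = c} \<inter> {c \<in> H1 (edge_double G). double_inv c = - c} = {0}"
  by (auto simp: zero_in_H1 double_inv_def fun_eq_iff)

lemma H1_edge_double_eigenspaces_sum:
  assumes "finite (arcs G)"
  shows "H1 (edge_double G) =
    {a + b | a b. a \<in> {c \<in> H1 (edge_double G). double_inv c = c}
                \<and> b \<in> {c \<in> H1 (edge_double G). double_inv c = - c}}"
proof (intro equalityI subsetI)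
  fix c assume c: "c \<in> H1 (edge_double G)"
  define a where "a = (\<lambda>x. (c x + double_inv c x) / 2)"
  define b where "b = (\<lambda>x. (c x - double_inv c x) / 2)"
  have "double_inv a = a" "double_inv b = - b"
    by (auto simp: a_def b_def double_inv_def fun_eq_iff field_simps)
  moreover have "double_proj a = (\<lambda>e. (double_proj c e + double_proj (double_inv c) e) / 2)"
    and "double_proj b = (\<lambda>e. (double_proj c e - double_proj (double_inv c) e) / 2)"
    by (auto simp: a_def b_def double_proj_def fun_eq_iff field_simps)
  then have "double_proj a = double_proj c" and "double_proj b = 0"
    by (simp_all add: double_proj_double_inv fun_eq_iff)
  moreover have "a \<in> C1 (edge_double G)" "b \<in> C1 (edge_double G)"
    using c by (auto simp: a_def b_def H1_def C1_edge_double_iff double_inv_def)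
  ultimately have "a \<in> {c \<in> H1 (edge_double G). double_inv c = c}"
    and "b \<in> {c \<in> H1 (edge_double G). double_inv c = - c}"
    using c by (auto simp: H1_edge_double_iff[OF assms] zero_in_H1)
  moreover have "c = a + b"
    by (auto simp: a_def b_def fun_eq_iff field_simps)
  ultimately show "c \<in> {a + b | a b. a \<in> {c \<in> H1 (edge_double G). double_inv c = c}
                \<and> b \<in> {c \<in> H1 (edge_double G). double_inv c = - c}}"
    by blast
next
  fix c assume "c \<in> {a + b | a b. a \<in> {c \<in> H1 (edge_double G). double_inv c = c}
                \<and> b \<in> {c \<in> H1 (edge_double G). double_inv c = - c}}"
  then obtain a b where a: "a \<in> H1 (edge_double G)" and b: "b \<in> H1 (edge_double G)"
    and c: "c = a + b" by blast
  have "double_proj (a + b) = double_proj a + double_proj b"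
    by (simp add: double_proj_def fun_eq_iff)
  moreover have "a + b \<in> C1 (edge_double G)"
    using a b by (simp add: H1_def C1_def)
  ultimately show "c \<in> H1 (edge_double G)"
    using a b c by (simp add: H1_edge_double_iff[OF assms] H1_add)
qed

definition double_lift :: "('b \<Rightarrow> real) \<Rightarrow> ('b \<times> bool \<Rightarrow> real)" where
  "double_lift y = (\<lambda>(e, b). if b then y e / 2 else - y e / 2)"

lemma double_proj_double_lift: "double_proj (double_lift y) = y"
  by (simp add: double_proj_def double_lift_def)

lemma double_inv_double_lift: "double_inv (double_lift y) = double_lift y"
  by (auto simp: double_inv_def double_lift_def fun_eq_iff)

lemma double_lift_double_proj: "double_inv c = c \<Longrightarrow> double_lift (double_proj c) = c"
  unfolding double_inv_fixed_iff by (auto simp: double_lift_def double_proj_def fun_eq_iff)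

lemma double_lift_in_C1: "y \<in> C1 G \<Longrightarrow> double_lift y \<in> C1 (edge_double G)"
  unfolding C1_edge_double_iff by (auto simp: C1_def double_lift_def)

lemma bij_betw_double_proj_H1:
  assumes "finite (arcs G)"
  shows "bij_betw double_proj {c \<in> H1 (edge_double G). double_inv c = c} (H1 G)"
proof (rule bij_betw_byWitness[where f' = double_lift])
  show "double_lift ` H1 G \<subseteq> {c \<in> H1 (edge_double G). double_inv c = c}"
  proof
    fix c assume "c \<in> double_lift ` H1 G"
    then obtain y where y: "y \<in> H1 G" and c: "c = double_lift y" by blast
    then have "y \<in> C1 G" by (simp add: H1_def)
    then show "c \<in> {c \<in> H1 (edge_double G). double_inv c = c}"
      using y by (simp add: c H1_edge_double_iff[OF assms] double_lift_in_C1
          double_proj_double_lift double_inv_double_lift)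
  qed
qed (auto simp: H1_edge_double_iff[OF assms] double_lift_double_proj double_proj_double_lift)

lemma H1_edge_double_neg_eigenspace:
  assumes "finite (arcs G)"
  shows "{c \<in> H1 (edge_double G). double_inv c = - c} = {c \<in> C1 (edge_double G). double_inv c = - c}"
  by (auto simp: H1_edge_double_iff[OF assms] double_proj_eq_0_iff[symmetric] zero_in_H1)

lemma bij_betw_double_neg_eigenspace_C1:
  "bij_betw (\<lambda>c e. c (e, True)) {c \<in> C1 (edge_double G). double_inv c = - c} (C1 G)"
proof (rule bij_betw_byWitness[where f' = "\<lambda>y (e, b). y e"])
  show "\<forall>c\<in>{c \<in> C1 (edge_double G). double_inv c = - c}. (\<lambda>(e, b). c (e, True)) = c"
    unfolding double_inv_neg_iff by (auto simp: fun_eq_iff all_bool_eq)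
qed (auto simp: double_inv_neg_iff C1_def edge_double_def)

lemma linear_restrict_double_plus: "Vector_Spaces.linear chain_scale chain_scale (\<lambda>c e. c (e, True))"
  by (rule linear_chain_scaleI) (simp_all add: chain_scale_def fun_eq_iff)

theorem lemma2p3:
  fixes G :: "('a, 'b) pre_digraph"
  assumes "fin_digraph G"
  defines "Hhat \<equiv> H1 (edge_double G)"
    and "E1 \<equiv> {c \<in> H1 (edge_double G). double_inv c = c}"
    and "Em1 \<equiv> {c \<in> H1 (edge_double G). double_inv c = - c}"
  shows "E1 \<inter> Em1 = {0}
         \<and> Hhat = {a + b | a b. a \<in> E1 \<and> b \<in> Em1}
         \<and> Vector_Spaces.linear chain_scale chain_scale double_proj
         \<and> bij_betw double_proj E1 (H1 G)
         \<and> {c \<in> Hhat. double_proj c = 0} = Em1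
         \<and> (\<exists>f :: ('b \<times> bool \<Rightarrow> real) \<Rightarrow> ('b \<Rightarrow> real).
           Vector_Spaces.linear chain_scale chain_scale f \<and> bij_betw f Em1 (C1 G))"
proof -
  have fin: "finite (arcs G)"
    using assms(1) by (rule fin_digraph.finite_arcs)
  have "{c \<in> Hhat. double_proj c = 0} = Em1"
    by (simp add: Hhat_def Em1_def double_proj_eq_0_iff)
  moreover have "bij_betw (\<lambda>c e. c (e, True)) Em1 (C1 G)"
    using bij_betw_double_neg_eigenspace_C1 by (simp add: Em1_def H1_edge_double_neg_eigenspace[OF fin])
  ultimately show ?thesis
    using H1_edge_double_eigenspaces_inter H1_edge_double_eigenspaces_sum[OF fin]
      linear_double_proj bij_betw_double_proj_H1[OF fin] linear_restrict_double_plus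
    unfolding Hhat_def E1_def Em1_def by blast
qed

end
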